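(* Let $(L,\le,\bot,\top)$ be a complete lattice and $(\&_i,\swarrow^i,\nwarrow_i)$, $i=1,\dots,n$, adjoint triples on $L$ with $x\,\&_i\,\top=\top\,\&_i\,x=x$ for all $x\in L$ and all $i$. Let $(A,B,R,\sigma)$ be a normalized context whose concept lattice $\mathcal{M}$ satisfies the ascending chain condition, and suppose $\{(A_\lambda,B_\lambda,R_\lambda,\sigma_\lambda)\mid\lambda\in\Lambda\}$ is a decomposition into independent subcontexts. Let $\langle g,f\rangle\in\mathcal{M}$ with $g\ne g_\top$ and $g\neq g_\bot$. Then there exists $\lambda\in\Lambda$ such that $$\langle g,f\rangle=\bigwedge M_g^{A_\lambda}\quad\text{and}\quad M_g^{A\setminus A_\lambda}=\varnothing.$$
   Context: An adjoint triple on $L$ is a triple of maps $\&,\swarrow,\nwarrow\colon L\times L\to L$ with $x\le z\swarrow y\iff x\& y\le z\iff y\le z\nwarrow x$. A context is $(A,B,R,\sigma)$ with $A,B$ non-empty sets, $R\colon A\times B\to L$, $\sigma\colon A\times B\to\{1,\dots,n\}$; it is normalized if every $a\in A$ has $b_1,b_2$ with $R(a,b_1)\ne\bot$, $R(a,b_2)=\bot$, and every $b\in B$ has $a_1,a_2$ with $R(a_1,b)\neq\bot$, $R(a_2,b)=\bot$. For $g\colon B\to L$, $f\colon A\to L$: $g^\uparrow(a)=\inf_{b}R(a,b)\swarrow^{\sigma(a,b)}g(b)$, $f^\downarrow(b)=\inf_{a}R(a,b)\nwarrow_{\sigma(a,b)}f(a)$. $\mathcal{M}$ is the set of pairs $\langle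 g,f\rangle$ with $g^\uparrow=f$, $f^\downarrow=g$, ordered by $g_1\le g_2$ pointwise; it is a complete lattice. $g_\top,g_\bot$ are the constant maps $B\to L$ with values $\top,\bot$. The fuzzy-attribute $\phi_{a,x}\colon A\to L$ takes value $x$ at $a$ and $\bot$ elsewhere. A meet-irreducible element of $\mathcal{M}$ is an element $c\neq$ top with $c=d\wedge e\Rightarrow c=d$ or $c=e$; every meet-irreducible concept has the form $\langle\phi_{a,x}^\downarrow,\phi_{a,x}^{\downarrow\uparrow}\rangle$ for some $a\in A,x\in L$. For $A'\subseteq A$, $M_F^{A'}$ is the set of meet-irreducible concepts of $\mathcal{M}$ of the form $\langle\phi_{a,x}^\downarrow,\phi_{a,x}^{\downarrow\uparrow}\rangle$ with $a\in A'$, and $M_g^{A'}=\{c\in M_F^{A'}\mid\langle g,f\rangle\preceq c\}$. A separable subcontext is a tuple $(Y,X,R_{Y\times X},\sigma_{Y\times X})$ with $Y\subsetneq A$, $X\subsetneq B$ non-empty, some $a\in Y,b\in X$ with $R(a,b)\ne\bot$, $R(a,b')=\bot$ on $Y\times(B\setminus X)$ and $R(a',b)=\bot$ on $(A\setminus Y)\times X$. An operator $\&$ has zero-divisors if $x\&y=\bot$ for some $x,y\ne\bot$. A decomposition into independent subcontexts $\{(A_\lambda,B_\lambda,R_\lambda,\sigma_\lambda)\}_{\lambda\in\Lambda}$ ($\Lambda\neq\varnothing$, restrictions to $A_\lambda\times B_\lambda$) requires: each tuple separable; the $A_\lambda$ partition $A$ and the $B_\lambda$ partition $B$ (pairwise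 disjoint, union the whole set); and for every $\lambda$, $\&_{\sigma(a,b)}$ has no zero-divisors for all $(a,b)\in((A\setminus A_\lambda)\times B_\lambda)\cup(A_\lambda\times(B\setminus B_\lambda))$. *)

theory Defs
  imports Main
begin

definition adjoint_triple :: "('l::complete_lattice \<Rightarrow> 'l \<Rightarrow> 'l) \<Rightarrow> ('l \<Rightarrow> 'l \<Rightarrow> 'l) \<Rightarrow> ('l \<Rightarrow> 'l \<Rightarrow> 'l) \<Rightarrow> bool" where
  "adjoint_triple cj sw nw \<longleftrightarrow>
     (\<forall>x y z. (x \<le> sw z y \<longleftrightarrow> cj x y \<le> z) \<and> (cj x y \<le> z \<longleftrightarrow> y \<le> nw z x))"

definition is_context :: "nat \<Rightarrow> 'a set \<Rightarrow> 'b set \<Rightarrow> ('a \<Rightarrow> 'b \<Rightarrow> 'l) \<Rightarrow> ('a \<Rightarrow> 'b \<Rightarrow> nat) \<Rightarrow> bool" where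
  "is_context n A B R \<sigma> \<longleftrightarrow> A \<noteq> {} \<and> B \<noteq> {} \<and> (\<forall>a\<in>A. \<forall>b\<in>B. \<sigma> a b \<in> {1..n})"

definition normalized :: "'a set \<Rightarrow> 'b set \<Rightarrow> ('a \<Rightarrow> 'b \<Rightarrow> 'l::complete_lattice) \<Rightarrow> bool" where
  "normalized A B R \<longleftrightarrow>
     (\<forall>a\<in>A. (\<exists>b1\<in>B. R a b1 \<noteq> bot) \<and> (\<exists>b2\<in>B. R a b2 = bot)) \<and>
     (\<forall>b\<in>B. (\<exists>a1\<in>A. R a1 b \<noteq> bot) \<and> (\<exists>a2\<in>A. R a2 b = bot))"

text \<open>Derivation operators. Maps B \<rightarrow> L / A \<rightarrow> L are represented by total functions
  taking the value bot outside B / A.\<close>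
definition up_op :: "'a set \<Rightarrow> 'b set \<Rightarrow> ('a \<Rightarrow> 'b \<Rightarrow> 'l::complete_lattice) \<Rightarrow> ('a \<Rightarrow> 'b \<Rightarrow> nat)
    \<Rightarrow> (nat \<Rightarrow> 'l \<Rightarrow> 'l \<Rightarrow> 'l) \<Rightarrow> ('b \<Rightarrow> 'l) \<Rightarrow> ('a \<Rightarrow> 'l)" where
  "up_op A B R \<sigma> sw g = (\<lambda>a. if a \<in> A then (INF b\<in>B. sw (\<sigma> a b) (R a b) (g b)) else bot)"

definition down_op :: "'a set \<Rightarrow> 'b set \<Rightarrow> ('a \<Rightarrow> 'b \<Rightarrow> 'l::complete_lattice) \<Rightarrow> ('a \<Rightarrow> 'b \<Rightarrow> nat)
    \<Rightarrow> (nat \<Rightarrow> 'l \<Rightarrow> 'l \<Rightarrow> 'l) \<Rightarrow> ('a \<Rightarrow> 'l) \<Rightarrow> ('b \<Rightarrow> 'l)" where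
  "down_op A B R \<sigma> nw f = (\<lambda>b. if b \<in> B then (INF a\<in>A. nw (\<sigma> a b) (R a b) (f a)) else bot)"

definition concepts :: "'a set \<Rightarrow> 'b set \<Rightarrow> ('a \<Rightarrow> 'b \<Rightarrow> 'l::complete_lattice) \<Rightarrow> ('a \<Rightarrow> 'b \<Rightarrow> nat)
    \<Rightarrow> (nat \<Rightarrow> 'l \<Rightarrow> 'l \<Rightarrow> 'l) \<Rightarrow> (nat \<Rightarrow> 'l \<Rightarrow> 'l \<Rightarrow> 'l) \<Rightarrow> (('b \<Rightarrow> 'l) \<times> ('a \<Rightarrow> 'l)) set" where
  "concepts A B R \<sigma> sw nw =
     {(g, f). up_op A B R \<sigma> sw g = f \<and> down_op A B R \<sigma> nw f = g}"

definition concept_le :: "'b set \<Rightarrow> ('b \<Rightarrow> 'l::complete_lattice) \<times> ('a \<Rightarrow> 'l) \<Rightarrow> ('b \<Rightarrow> 'l) \<times> ('a \<Rightarrow> 'l) \<Rightarrow> bool" where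
  "concept_le B c d \<longleftrightarrow> (\<forall>b\<in>B. fst c b \<le> fst d b)"

definition is_meet_in :: "'b set \<Rightarrow> (('b \<Rightarrow> 'l::complete_lattice) \<times> ('a \<Rightarrow> 'l)) set
    \<Rightarrow> (('b \<Rightarrow> 'l) \<times> ('a \<Rightarrow> 'l)) set \<Rightarrow> ('b \<Rightarrow> 'l) \<times> ('a \<Rightarrow> 'l) \<Rightarrow> bool" where
  "is_meet_in B M S c \<longleftrightarrow> c \<in> M \<and> (\<forall>d\<in>S. concept_le B c d) \<and>
     (\<forall>c'\<in>M. (\<forall>d\<in>S. concept_le B c' d) \<longrightarrow> concept_le B c' c)"

definition meet_irreducible_in :: "'b set \<Rightarrow> (('b \<Rightarrow> 'l::complete_lattice) \<times> ('a \<Rightarrow> 'l)) set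
    \<Rightarrow> ('b \<Rightarrow> 'l) \<times> ('a \<Rightarrow> 'l) \<Rightarrow> bool" where
  "meet_irreducible_in B M c \<longleftrightarrow> c \<in> M \<and> \<not> is_meet_in B M {} c \<and>
     (\<forall>d\<in>M. \<forall>e\<in>M. is_meet_in B M {d, e} c \<longrightarrow> c = d \<or> c = e)"

definition acc_in :: "'b set \<Rightarrow> (('b \<Rightarrow> 'l::complete_lattice) \<times> ('a \<Rightarrow> 'l)) set \<Rightarrow> bool" where
  "acc_in B M \<longleftrightarrow> \<not> (\<exists>s::nat \<Rightarrow> ('b \<Rightarrow> 'l) \<times> ('a \<Rightarrow> 'l).
      \<forall>k. s k \<in> M \<and> concept_le B (s k) (s (Suc k)) \<and> s k \<noteq> s (Suc k))"

definition phi :: "'a \<Rightarrow> 'l::complete_lattice \<Rightarrow> 'a \<Rightarrow> 'l" where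
  "phi a x = (\<lambda>a'. if a' = a then x else bot)"

definition MF :: "'a set \<Rightarrow> 'b set \<Rightarrow> ('a \<Rightarrow> 'b \<Rightarrow> 'l::complete_lattice) \<Rightarrow> ('a \<Rightarrow> 'b \<Rightarrow> nat)
    \<Rightarrow> (nat \<Rightarrow> 'l \<Rightarrow> 'l \<Rightarrow> 'l) \<Rightarrow> (nat \<Rightarrow> 'l \<Rightarrow> 'l \<Rightarrow> 'l) \<Rightarrow> 'a set
    \<Rightarrow> (('b \<Rightarrow> 'l) \<times> ('a \<Rightarrow> 'l)) set" where
  "MF A B R \<sigma> sw nw A' =
     {c. meet_irreducible_in B (concepts A B R \<sigma> sw nw) c \<and>
         (\<exists>a\<in>A'. \<exists>x. c = (down_op A B R \<sigma> nw (phi a x),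
                            up_op A B R \<sigma> sw (down_op A B R \<sigma> nw (phi a x))))}"

definition Mg :: "'a set \<Rightarrow> 'b set \<Rightarrow> ('a \<Rightarrow> 'b \<Rightarrow> 'l::complete_lattice) \<Rightarrow> ('a \<Rightarrow> 'b \<Rightarrow> nat)
    \<Rightarrow> (nat \<Rightarrow> 'l \<Rightarrow> 'l \<Rightarrow> 'l) \<Rightarrow> (nat \<Rightarrow> 'l \<Rightarrow> 'l \<Rightarrow> 'l) \<Rightarrow> 'a set
    \<Rightarrow> ('b \<Rightarrow> 'l) \<times> ('a \<Rightarrow> 'l) \<Rightarrow> (('b \<Rightarrow> 'l) \<times> ('a \<Rightarrow> 'l)) set" where
  "Mg A B R \<sigma> sw nw A' c = {d \<in> MF A B R \<sigma> sw nw A'. concept_le B c d}"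

definition separable :: "'a set \<Rightarrow> 'b set \<Rightarrow> ('a \<Rightarrow> 'b \<Rightarrow> 'l::complete_lattice) \<Rightarrow> 'a set \<Rightarrow> 'b set \<Rightarrow> bool" where
  "separable A B R Y X \<longleftrightarrow> Y \<subset> A \<and> X \<subset> B \<and> Y \<noteq> {} \<and> X \<noteq> {} \<and>
     (\<exists>a\<in>Y. \<exists>b\<in>X. R a b \<noteq> bot) \<and>
     (\<forall>a\<in>Y. \<forall>b\<in>B - X. R a b = bot) \<and>
     (\<forall>a\<in>A - Y. \<forall>b\<in>X. R a b = bot)"

definition no_zero_divisors :: "('l::complete_lattice \<Rightarrow> 'l \<Rightarrow> 'l) \<Rightarrow> bool" where
  "no_zero_divisors cj \<longleftrightarrow> (\<forall>x y. x \<noteq> bot \<longrightarrow> y \<noteq> bot \<longrightarrow> cj x y \<noteq> bot)"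

definition independent_decomposition :: "'a set \<Rightarrow> 'b set \<Rightarrow> ('a \<Rightarrow> 'b \<Rightarrow> 'l::complete_lattice)
    \<Rightarrow> ('a \<Rightarrow> 'b \<Rightarrow> nat) \<Rightarrow> (nat \<Rightarrow> 'l \<Rightarrow> 'l \<Rightarrow> 'l) \<Rightarrow> 'i set \<Rightarrow> ('i \<Rightarrow> 'a set) \<Rightarrow> ('i \<Rightarrow> 'b set) \<Rightarrow> bool" where
  "independent_decomposition A B R \<sigma> cj \<Lambda> As Bs \<longleftrightarrow>
     \<Lambda> \<noteq> {} \<and>
     (\<forall>l\<in>\<Lambda>. separable A B R (As l) (Bs l)) \<and>
     (\<forall>l\<in>\<Lambda>. \<forall>\<mu>\<in>\<Lambda>. l \<noteq> \<mu> \<longrightarrow> As l \<inter> As \<mu> = {} \<and> Bs l \<inter> Bs \<mu> = {}) \<and>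
     (\<Union>l\<in>\<Lambda>. As l) = A \<and> (\<Union>l\<in>\<Lambda>. Bs l) = B \<and>
     (\<forall>l\<in>\<Lambda>. \<forall>(a, b) \<in> ((A - As l) \<times> Bs l) \<union> (As l \<times> (B - Bs l)).
        no_zero_divisors (cj (\<sigma> a b)))"

end

theory Submission
  imports Defs
begin

(* Fix b0 with g(b0) \<noteq> \<bottom> and the block \<lambda> with b0 \<in> B\<^sub>\<lambda>. For a \<notin> A\<^sub>\<lambda> we have R(a,b0) = \<bottom>, and since
   the conjunctor at (a,b0) has no zero-divisors, its residuum sends (\<bottom>, x) to \<bottom> whenever x \<noteq> \<bottom>.
   So an attribute concept generated by such an a either has extent \<bottom> at b0, and then does not
   lie above <g,f>, or (for x = \<bottom>) is the top of M, which is not meet-irreducible: M_g^{A-A\<^sub>\<lambda>}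
   is empty. Independently of the decomposition, the ascending chain condition makes every concept
   the meet of M_g^A: if a lower bound c' of M_g^A were not below <g,f>, a concept maximal among
   those above <g,f> but not above c' would be meet-irreducible and equal to an attribute concept,
   hence in M_g^A. *)

lemma acc_in_maximal_element:
  assumes acc: "acc_in B M" and "T \<subseteq> M" and "T \<noteq> {}"
  shows "\<exists>d\<in>T. \<forall>e\<in>T. concept_le B d e \<longrightarrow> e = d"
proof (rule ccontr)
  assume "\<not> ?thesis"
  then obtain next_in_T where next_in_T:
    "\<forall>d\<in>T. next_in_T d \<in> T \<and> concept_le B d (next_in_T d) \<and> next_in_T d \<noteq> d"
    by metis
  obtain t0 where "t0 \<in> T" using \<open>T \<noteq> {}\<close> by blast
  define s where "s k = (next_in_T ^^ k) t0" for k
  have s_in_T: "s k \<in> T" for k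
    by (induction k) (use \<open>t0 \<in> T\<close> next_in_T in \<open>auto simp: s_def\<close>)
  have "s k \<in> M \<and> concept_le B (s k) (s (Suc k)) \<and> s k \<noteq> s (Suc k)" for k
    using s_in_T[of k] next_in_T \<open>T \<subseteq> M\<close> by (auto simp: s_def)
  then show False using acc unfolding acc_in_def by blast
qed

lemma concept_le_trans: "concept_le B c d \<Longrightarrow> concept_le B d e \<Longrightarrow> concept_le B c e"
  unfolding concept_le_def by (meson order_trans)

lemma meet_irreducible_if_maximal_not_above:
  assumes "d \<in> M" "c' \<in> M" "\<not> concept_le B c' d"
    and above: "\<And>e. e \<in> M \<Longrightarrow> concept_le B d e \<Longrightarrow> e \<noteq> d \<Longrightarrow> concept_le B c' e"
  shows "meet_irreducible_in B M d"
  unfolding meet_irreducible_in_def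
proof (intro conjI ballI impI)
  show "\<not> is_meet_in B M {} d"
    using assms(2,3) unfolding is_meet_in_def by blast
  fix e1 e2 assume "e1 \<in> M" "e2 \<in> M" and meet: "is_meet_in B M {e1, e2} d"
  show "d = e1 \<or> d = e2"
  proof (rule ccontr)
    assume "\<not> (d = e1 \<or> d = e2)"
    with meet above \<open>e1 \<in> M\<close> \<open>e2 \<in> M\<close> have "concept_le B c' e1" "concept_le B c' e2"
      unfolding is_meet_in_def by blast+
    with meet \<open>c' \<in> M\<close> assms(3) show False
      unfolding is_meet_in_def by blast
  qed
qed (fact \<open>d \<in> M\<close>)

lemma Mg_Un: "Mg A B R \<sigma> sw nw (X \<union> Y) c = Mg A B R \<sigma> sw nw X c \<union> Mg A B R \<sigma> sw nw Y c"
  unfolding Mg_def MF_def by blast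

lemma independent_decomposition_block:
  assumes "independent_decomposition A B R \<sigma> cj \<Lambda> As Bs" "b \<in> B"
  obtains l where "l \<in> \<Lambda>" "As l \<subseteq> A"
    "\<And>a. a \<in> A - As l \<Longrightarrow> R a b = bot \<and> no_zero_divisors (cj (\<sigma> a b))"
proof -
  note dec = assms(1)[unfolded independent_decomposition_def]
  have "(\<Union>l\<in>\<Lambda>. Bs l) = B" using dec by (elim conjE)
  with assms(2) obtain l where l: "l \<in> \<Lambda>" "b \<in> Bs l" by blast
  have sep: "separable A B R (As l) (Bs l)"
    using dec l(1) by (elim conjE) blast
  have "\<forall>(a, b) \<in> ((A - As l) \<times> Bs l) \<union> (As l \<times> (B - Bs l)). no_zero_divisors (cj (\<sigma> a b))"
    using dec l(1) by (elim conjE) blast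
  then have "no_zero_divisors (cj (\<sigma> a b))" if "a \<in> A - As l" for a
    using that l(2) by blast
  with sep l show thesis
    by (intro that) (auto simp: separable_def)
qed

locale adjoint_context =
  fixes n :: nat
    and cj sw nw :: "nat \<Rightarrow> 'l::complete_lattice \<Rightarrow> 'l \<Rightarrow> 'l"
    and A :: "'a set" and B :: "'b set"
    and R :: "'a \<Rightarrow> 'b \<Rightarrow> 'l" and \<sigma> :: "'a \<Rightarrow> 'b \<Rightarrow> nat"
  assumes adjoint: "\<forall>i\<in>{1..n}. adjoint_triple (cj i) (sw i) (nw i)"
    and \<sigma>_range: "\<forall>a\<in>A. \<forall>b\<in>B. \<sigma> a b \<in> {1..n}"
begin

abbreviation "down \<equiv> down_op A B R \<sigma> nw"
abbreviation "up \<equiv> up_op A B R \<sigma> sw"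
abbreviation "\<M> \<equiv> concepts A B R \<sigma> sw nw"
abbreviation "attr_concept a x \<equiv> (down (phi a x), up (down (phi a x)))"

lemma adjointD:
  assumes "a \<in> A" "b \<in> B"
  shows "x \<le> sw (\<sigma> a b) z y \<longleftrightarrow> cj (\<sigma> a b) x y \<le> z"
    and "cj (\<sigma> a b) x y \<le> z \<longleftrightarrow> y \<le> nw (\<sigma> a b) z x"
  using adjoint \<sigma>_range assms unfolding adjoint_triple_def by blast+

lemma galois_connection: "(\<forall>b\<in>B. g b \<le> down f b) \<longleftrightarrow> (\<forall>a\<in>A. f a \<le> up g a)"
  unfolding down_op_def up_op_def by (auto simp: le_INF_iff adjointD)

lemma le_up_down: "a \<in> A \<Longrightarrow> f a \<le> up (down f) a"
  using galois_connection[of "down f" f] by blast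

lemma le_down_up: "b \<in> B \<Longrightarrow> g b \<le> down (up g) b"
  using galois_connection[of g "up g"] by blast

lemma down_antimono:
  assumes "\<forall>a\<in>A. f1 a \<le> f2 a" "b \<in> B"
  shows "down f2 b \<le> down f1 b"
proof -
  have "\<forall>a\<in>A. f1 a \<le> up (down f2) a" using assms(1) le_up_down by (blast intro: order_trans)
  then show ?thesis using galois_connection[of "down f2" f1] assms(2) by blast
qed

lemma down_outside: "b \<notin> B \<Longrightarrow> down f b = bot"
  by (simp add: down_op_def)

lemma down_up_down: "down (up (down f)) = down f"
proof
  fix b
  show "down (up (down f)) b = down f b"
  proof (cases "b \<in> B")
    case True
    then show ?thesis
      using down_antimono[of f "up (down f)" b] le_up_down le_down_up by (blast intro: antisym)
  qed (simp add: down_outside)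
qed

lemma attr_concept_in_concepts: "attr_concept a x \<in> \<M>"
  unfolding concepts_def using down_up_down by simp

lemma concept_extent: "(h, k) \<in> \<M> \<Longrightarrow> h = down k"
  unfolding concepts_def by auto

lemma concept_le_attr_concept:
  assumes "(h, k) \<in> \<M>" "a \<in> A"
  shows "concept_le B (h, k) (attr_concept a (k a))"
proof -
  have "\<forall>a'\<in>A. phi a (k a) a' \<le> k a'" by (simp add: phi_def)
  then show ?thesis
    using down_antimono concept_extent[OF assms(1)] unfolding concept_le_def by auto
qed

lemma concept_le_if_le_attr_concepts:
  assumes "(h, k) \<in> \<M>" "\<forall>a\<in>A. concept_le B c (attr_concept a (k a))"
  shows "concept_le B c (h, k)"
  unfolding concept_le_def
proof
  fix b assume "b \<in> B"
  have "fst c b \<le> nw (\<sigma> a b) (R a b) (k a)" if "a \<in> A" for a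
  proof -
    have "fst c b \<le> down (phi a (k a)) b"
      using assms(2) that \<open>b \<in> B\<close> unfolding concept_le_def by auto
    also have "\<dots> \<le> nw (\<sigma> a b) (R a b) (phi a (k a) a)"
      unfolding down_op_def using that \<open>b \<in> B\<close> by (auto intro: INF_lower)
    finally show ?thesis by (simp add: phi_def)
  qed
  then have "fst c b \<le> down k b"
    unfolding down_op_def using \<open>b \<in> B\<close> by (auto intro: INF_greatest)
  then show "fst c b \<le> fst (h, k) b" using concept_extent[OF assms(1)] by simp
qed

lemma concept_is_meet_of_Mg:
  assumes acc: "acc_in B \<M>" and gf: "(g, f) \<in> \<M>"
  shows "is_meet_in B \<M> (Mg A B R \<sigma> sw nw A (g, f)) (g, f)"
  unfolding is_meet_in_def
proof (intro conjI ballI impI)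
  show "concept_le B (g, f) d" if "d \<in> Mg A B R \<sigma> sw nw A (g, f)" for d
    using that unfolding Mg_def by blast
  fix c' assume "c' \<in> \<M>" and lower: "\<forall>d\<in>Mg A B R \<sigma> sw nw A (g, f). concept_le B c' d"
  show "concept_le B c' (g, f)"
  proof (rule ccontr)
    assume "\<not> concept_le B c' (g, f)"
    define T where "T = {e \<in> \<M>. concept_le B (g, f) e \<and> \<not> concept_le B c' e}"
    have "T \<subseteq> \<M>" by (simp add: T_def)
    have "(g, f) \<in> T"
      using gf \<open>\<not> concept_le B c' (g, f)\<close> by (simp add: T_def concept_le_def)
    then obtain h k where "(h, k) \<in> T" and maximal: "\<forall>e\<in>T. concept_le B (h, k) e \<longrightarrow> e = (h, k)"
      using acc_in_maximal_element[OF acc \<open>T \<subseteq> \<M>\<close>] by (metis empty_iff surj_pair)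
    then have "(h, k) \<in> \<M>" "\<not> concept_le B c' (h, k)" "concept_le B (g, f) (h, k)"
      by (simp_all add: T_def)
    have "meet_irreducible_in B \<M> (h, k)"
      using \<open>(h, k) \<in> \<M>\<close> \<open>c' \<in> \<M>\<close> \<open>\<not> concept_le B c' (h, k)\<close>
    proof (rule meet_irreducible_if_maximal_not_above)
      show "concept_le B c' e" if "e \<in> \<M>" "concept_le B (h, k) e" "e \<noteq> (h, k)" for e
        using that maximal concept_le_trans[OF \<open>concept_le B (g, f) (h, k)\<close>]
        unfolding T_def by blast
    qed
    obtain a where "a \<in> A" and a_not_above: "\<not> concept_le B c' (attr_concept a (k a))"
      using concept_le_if_le_attr_concepts[OF \<open>(h, k) \<in> \<M>\<close>] \<open>\<not> concept_le B c' (h, k)\<close> by blast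
    have "concept_le B (h, k) (attr_concept a (k a))"
      using concept_le_attr_concept[OF \<open>(h, k) \<in> \<M>\<close> \<open>a \<in> A\<close>] .
    moreover from this have "attr_concept a (k a) \<in> T"
      unfolding T_def using attr_concept_in_concepts a_not_above
        concept_le_trans[OF \<open>concept_le B (g, f) (h, k)\<close>] by blast
    ultimately have "(h, k) = attr_concept a (k a)"
      using maximal by (metis (no_types))
    with \<open>a \<in> A\<close> \<open>meet_irreducible_in B \<M> (h, k)\<close> \<open>concept_le B (g, f) (h, k)\<close>
    have "(h, k) \<in> Mg A B R \<sigma> sw nw A (g, f)"
      unfolding Mg_def MF_def by blast
    with lower \<open>\<not> concept_le B c' (h, k)\<close> show False by blast
  qed
qed (fact gf)

lemma attr_concept_bot_not_meet_irreducible: "\<not> meet_irreducible_in B \<M> (attr_concept a bot)"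
proof -
  have "nw (\<sigma> a' b) z bot = top" if "a' \<in> A" "b \<in> B" for a' b z
  proof -
    have "cj (\<sigma> a' b) bot top \<le> z" using adjointD(1)[OF that, of bot z top] by simp
    then show ?thesis using adjointD(2)[OF that] by (simp add: top_unique)
  qed
  then have "\<forall>b\<in>B. fst (attr_concept a bot) b = top"
    by (simp add: down_op_def phi_def)
  then have "concept_le B c (attr_concept a bot)" for c
    unfolding concept_le_def by simp
  then have "is_meet_in B \<M> {} (attr_concept a bot)"
    unfolding is_meet_in_def using attr_concept_in_concepts by blast
  then show ?thesis unfolding meet_irreducible_in_def by blast
qed

lemma attr_concept_extent_bot:
  assumes "a \<in> A" "b \<in> B" "R a b = bot" "no_zero_divisors (cj (\<sigma> a b))" "x \<noteq> bot"
  shows "fst (attr_concept a x) b = bot"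
proof -
  have "cj (\<sigma> a b) x (nw (\<sigma> a b) bot x) \<le> bot"
    using adjointD(2)[OF assms(1,2)] by simp
  then have "nw (\<sigma> a b) bot x = bot"
    using assms(4,5) unfolding no_zero_divisors_def by (metis bot_unique)
  then have "nw (\<sigma> a b) (R a b) x = bot" using assms(3) by simp
  moreover have "fst (attr_concept a x) b \<le> nw (\<sigma> a b) (R a b) (phi a x a)"
    unfolding down_op_def using assms(1,2) by (auto intro: INF_lower)
  ultimately show ?thesis by (simp add: phi_def bot_unique)
qed

lemma Mg_eq_empty_if_zero_column:
  assumes "b \<in> B" "g b \<noteq> bot"
    and zero_column: "\<And>a. a \<in> X \<Longrightarrow> a \<in> A \<and> R a b = bot \<and> no_zero_divisors (cj (\<sigma> a b))"
  shows "Mg A B R \<sigma> sw nw X (g, f) = {}"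
proof -
  have False if "a \<in> X" "meet_irreducible_in B \<M> (attr_concept a x)"
    "concept_le B (g, f) (attr_concept a x)" for a x
  proof (cases "x = bot")
    case True
    then show False using that(2) attr_concept_bot_not_meet_irreducible by metis
  next
    case False
    have "g b \<le> fst (attr_concept a x) b"
      using that(3) \<open>b \<in> B\<close> unfolding concept_le_def by (simp only: fst_conv)
    also have "\<dots> = bot"
      using zero_column[OF \<open>a \<in> X\<close>] \<open>b \<in> B\<close> False by (intro attr_concept_extent_bot) auto
    finally show False using \<open>g b \<noteq> bot\<close> by (simp add: bot_unique)
  qed
  then show ?thesis unfolding Mg_def MF_def by blast
qed

end

theorem proposition30:
  fixes n :: nat
    and cj sw nw :: "nat \<Rightarrow> 'l::complete_lattice \<Rightarrow> 'l \<Rightarrow> 'l"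
    and A :: "'a set" and B :: "'b set"
    and R :: "'a \<Rightarrow> 'b \<Rightarrow> 'l" and \<sigma> :: "'a \<Rightarrow> 'b \<Rightarrow> nat"
    and \<Lambda> :: "'i set" and As :: "'i \<Rightarrow> 'a set" and Bs :: "'i \<Rightarrow> 'b set"
    and g :: "'b \<Rightarrow> 'l" and f :: "'a \<Rightarrow> 'l"
  assumes adj: "\<forall>i\<in>{1..n}. adjoint_triple (cj i) (sw i) (nw i)"
    and unit: "\<forall>i\<in>{1..n}. \<forall>x. cj i x top = x \<and> cj i top x = x"
    and ctx: "is_context n A B R \<sigma>"
    and norm: "normalized A B R"
    and acc: "acc_in B (concepts A B R \<sigma> sw nw)"
    and dec: "independent_decomposition A B R \<sigma> cj \<Lambda> As Bs"
    and gf: "(g, f) \<in> concepts A B R \<sigma> sw nw"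
    and g_not_top: "\<not> (\<forall>b\<in>B. g b = top)"
    and g_not_bot: "\<not> (\<forall>b\<in>B. g b = bot)"
  shows "\<exists>l\<in>\<Lambda>.
           is_meet_in B (concepts A B R \<sigma> sw nw) (Mg A B R \<sigma> sw nw (As l) (g, f)) (g, f) \<and>
           Mg A B R \<sigma> sw nw (A - As l) (g, f) = {}"
proof -
  interpret adjoint_context n cj sw nw A B R \<sigma>
    using adj ctx unfolding is_context_def by (intro adjoint_context.intro) blast+
  obtain b where "b \<in> B" "g b \<noteq> bot" using g_not_bot by blast
  obtain l where "l \<in> \<Lambda>" "As l \<subseteq> A"
    and zero_column: "\<And>a. a \<in> A - As l \<Longrightarrow> R a b = bot \<and> no_zero_divisors (cj (\<sigma> a b))"
    using independent_decomposition_block[OF dec \<open>b \<in> B\<close>] by blast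
  have empty: "Mg A B R \<sigma> sw nw (A - As l) (g, f) = {}"
    using \<open>b \<in> B\<close> \<open>g b \<noteq> bot\<close> zero_column by (intro Mg_eq_empty_if_zero_column) auto
  have "Mg A B R \<sigma> sw nw A (g, f) = Mg A B R \<sigma> sw nw (As l) (g, f)"
    using Mg_Un[of A B R \<sigma> sw nw "As l" "A - As l" "(g, f)"] empty \<open>As l \<subseteq> A\<close>
    by (simp add: Un_absorb1)
  then have "is_meet_in B \<M> (Mg A B R \<sigma> sw nw (As l) (g, f)) (g, f)"
    using concept_is_meet_of_Mg[OF acc gf] by simp
  with empty \<open>l \<in> \<Lambda>\<close> show ?thesis by blast
qed

end
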